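(* In the model and for the Algorithm $A$ described in the context, fix $h,\ell$ and a realization of the sample information $\psi$, and let $n_1=h-s_1$, $n_2=\ell-s_2$. Let $I_{\mathrm{order}}$ be the arrival sequence in which the $n_2$ type 2 agents arrive first, followed by the $n_1$ type 1 agents, and let $I$ be any arrival sequence containing $n_2$ type 2 agents and $n_1$ type 1 agents. Then $$\frac{\mathbb E[\mathrm{REW}_A(I_{\mathrm{order}},\psi)]}{\mathrm{OPT}(I_{\mathrm{order}})}\le\frac{\mathbb E[\mathrm{REW}_A(I,\psi)]}{\mathrm{OPT}(I)}.$$
   Context: Model: a decision-maker has $m$ units of a divisible resource; an accepted type-$i$ agent ($i\in\{1,2\}$) yields a reward in $\{0,1\}$ with mean $r_i\in(0,1)$, $r_1>r_2$, unknown. An adversary chooses integers $h,\ell\ge0$; each agent is independently sampled with known probability $p\in(0,1)$; $s_1\sim\mathrm{Bin}(h,p)$, $s_2\sim\mathrm{Bin}(\ell,p)$; sampled agents reveal realized rewards $\rho_{i,j}\sim\mathrm{Ber}(r_i)$; $\psi$ is the sample information. Remaining agents arrive online in order $I$ and are irrevocably accepted (possibly fractionally) or rejected, total allocation at most $m$. $\mathrm{OPT}(I)=r_1\min\{n_1,m\}+r_2\min\{n_2,(m-n_1)^+\}$; $\mathrm{REW}_A(I,\psi)$ is the cumulative expected reward of $A$; $\mathbb E$ is over the algorithm's randomness. Protection level policy for type $i$ with level $x$: accept type $i$ agents while resource remains; accept type $-i$ agents only while fewer than $m-x$ type $-i$ agents have been accepted and resource remains. Algorithm $A$: $\hat r_i=\frac1{s_i}\sum_j\rho_{i,j}$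 if $s_i>0$, else $\hat r_i\sim\mathrm{Uniform}(0,1)$; if $\hat r_1>\hat r_2$ use the protection level policy for type 1 with level $\min\{m,s_1\frac{1-p}{p}\}$, otherwise for type 2 with level $\min\{m,s_2\frac{1-p}{p}\}$. *)

theory Defs
  imports "HOL-Probability.Probability"
begin

text \<open>Agent types are encoded as natural numbers 1 and 2; an arrival sequence is a
list of types. The mean reward of a type-t agent is rw r1 r2 t.\<close>

definition rw :: "real \<Rightarrow> real \<Rightarrow> nat \<Rightarrow> real" where
  "rw r1 r2 t = (if t = 1 then r1 else r2)"

text \<open>One step of the protection level policy for type i with level x (resource m).
State: (remaining resource, amount allocated to type -i agents, cumulative expected reward).\<close>

definition prot_step ::
  "real \<Rightarrow> real \<Rightarrow> real \<Rightarrow> nat \<Rightarrow> real \<Rightarrow> real \<times> real \<times> real \<Rightarrow> nat \<Rightarrow> real \<times> real \<times> real" where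
  "prot_step r1 r2 m i x = (\<lambda>(R, a, tot) t.
     if t = i then
       (let y = min 1 R in (R - y, a, tot + rw r1 r2 t * y))
     else
       (let y = max 0 (min 1 (min R (m - x - a))) in (R - y, a + y, tot + rw r1 r2 t * y)))"

definition prot_reward ::
  "real \<Rightarrow> real \<Rightarrow> real \<Rightarrow> nat \<Rightarrow> real \<Rightarrow> nat list \<Rightarrow> real" where
  "prot_reward r1 r2 m i x I = snd (snd (foldl (prot_step r1 r2 m i x) (m, 0, 0) I))"

text \<open>Estimate of r_i: empirical mean of the sampled rewards, or the uniform draw u if no
sample of that type was taken.\<close>

definition hat_r :: "bool list \<Rightarrow> real \<Rightarrow> real" where
  "hat_r rho u = (if rho = [] then u
                  else (\<Sum>b\<leftarrow>rho. if b then 1 else 0) / real (length rho))"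

text \<open>Reward of algorithm A for given sample information (rho1, rho2) and a realization
omega = (u1, u2) of its internal uniform random draws.\<close>

definition alg_reward ::
  "real \<Rightarrow> real \<Rightarrow> real \<Rightarrow> real \<Rightarrow> bool list \<Rightarrow> bool list \<Rightarrow> nat list \<Rightarrow> real \<times> real \<Rightarrow> real" where
  "alg_reward r1 r2 m p rho1 rho2 I \<omega> =
     (if hat_r rho1 (fst \<omega>) > hat_r rho2 (snd \<omega>)
      then prot_reward r1 r2 m 1 (min m (real (length rho1) * (1 - p) / p)) I
      else prot_reward r1 r2 m 2 (min m (real (length rho2) * (1 - p) / p)) I)"

definition unif01 :: "real measure" where
  "unif01 = uniform_measure lborel {0..1}"

definition exp_alg_reward ::
  "real \<Rightarrow> real \<Rightarrow> real \<Rightarrow> real \<Rightarrow> bool list \<Rightarrow> bool list \<Rightarrow> nat list \<Rightarrow> real" where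
  "exp_alg_reward r1 r2 m p rho1 rho2 I =
     integral\<^sup>L (unif01 \<Otimes>\<^sub>M unif01) (alg_reward r1 r2 m p rho1 rho2 I)"

definition OPT :: "real \<Rightarrow> real \<Rightarrow> real \<Rightarrow> nat list \<Rightarrow> real" where
  "OPT r1 r2 m I = (let n1 = real (count (mset I) 1); n2 = real (count (mset I) 2) in
     r1 * min n1 m + r2 * min n2 (max 0 (m - n1)))"

end

theory Submission
  imports Defs
begin

text \<open>Once the internal draws of A are fixed, A runs a protection level policy whose level does
not depend on the arrival order, and OPT only depends on the numbers of agents of each type. So it
suffices that for every protection level policy the order "all type 2 agents first" yields the
least reward. Along any order the policy keeps accepting until the resource, or for the
unprotected type the cap m - x, runs out. Hence its final allocation gives at least as much to
type 1, and at least as much in total, as the allocation of the type-2-first order, which is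
explicit; as r1 \<ge> r2 \<ge> 0, the reward r1 u1 + r2 u2 is monotone in (u1, u1 + u2).\<close>

text \<open>In a state (R, a, tot) of the policy protecting type i, a is the amount given to the other
type and b = m - R - a the amount given to type i, after ni type-i and no other agents.\<close>

definition protection_invariant ::
  "real \<Rightarrow> real \<Rightarrow> real \<Rightarrow> real \<Rightarrow> nat \<Rightarrow> nat \<Rightarrow> real \<times> real \<times> real \<Rightarrow> bool" where
  "protection_invariant ri ro m x ni no = (\<lambda>(R, a, tot). let b = m - R - a in
     0 \<le> R \<and> 0 \<le> a \<and> a \<le> no \<and> a \<le> m - x \<and> 0 \<le> b \<and> b \<le> ni \<and>
     (b = ni \<or> R = 0) \<and> (a = no \<or> a = m - x \<or> R = 0) \<and> tot = ri * b + ro * a)"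

lemma prot_step_protected:
  "prot_step r1 r2 m i x (R, a, tot) i = (R - min 1 R, a, tot + rw r1 r2 i * min 1 R)"
  by (simp add: prot_step_def Let_def)

lemma prot_step_other:
  "j \<noteq> i \<Longrightarrow> prot_step r1 r2 m i x (R, a, tot) j
     = (let y = max 0 (min 1 (min R (m - x - a))) in (R - y, a + y, tot + rw r1 r2 j * y))"
  by (simp add: prot_step_def)

lemma protection_invariant_init:
  "0 \<le> m \<Longrightarrow> x \<le> m \<Longrightarrow> protection_invariant ri ro m x 0 0 (m, 0, 0)"
  by (simp add: protection_invariant_def)

lemma protection_invariant_step_protected:
  assumes "protection_invariant (rw r1 r2 i) ro m x ni no s"
  shows "protection_invariant (rw r1 r2 i) ro m x (Suc ni) no (prot_step r1 r2 m i x s i)"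
proof -
  obtain R a tot where s: "s = (R, a, tot)" by (cases s)
  have "min 1 R = 1 \<or> min 1 R = R" "min 1 R \<le> 1" "min 1 R \<le> R" by linarith+
  then show ?thesis using assms
    by (auto simp: s protection_invariant_def prot_step_protected Let_def algebra_simps)
qed

lemma protection_invariant_step_other:
  assumes "protection_invariant ri (rw r1 r2 j) m x ni no s" "j \<noteq> i"
  shows "protection_invariant ri (rw r1 r2 j) m x ni (Suc no) (prot_step r1 r2 m i x s j)"
proof -
  obtain R a tot where s: "s = (R, a, tot)" by (cases s)
  define y where "y = min 1 (min R (m - x - a))"
  have "0 \<le> R" "a \<le> m - x" using assms(1) by (auto simp: s protection_invariant_def Let_def)
  then have "max 0 y = y" "y = 1 \<or> y = R \<or> y = m - x - a" "0 \<le> y" "y \<le> 1" "y \<le> R" "y \<le> m - x - a"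
    by (auto simp: y_def)
  then show ?thesis using assms
    by (auto simp: s protection_invariant_def prot_step_other Let_def algebra_simps simp flip: y_def)
qed

lemma protection_invariant_foldl:
  assumes "protection_invariant (rw r1 r2 i) (rw r1 r2 j) m x ni no s" "set xs \<subseteq> {i, j}" "i \<noteq> j"
  shows "protection_invariant (rw r1 r2 i) (rw r1 r2 j) m x
           (ni + count (mset xs) i) (no + count (mset xs) j) (foldl (prot_step r1 r2 m i x) s xs)"
  using assms
proof (induction xs arbitrary: ni no s)
  case Nil
  then show ?case by simp
next
  case (Cons t xs)
  then consider "t = i" | "t = j" by auto
  then show ?case
  proof cases
    case 1
    then show ?thesis
      using Cons.IH[OF protection_invariant_step_protected] Cons.prems by auto
  next
    case 2
    then show ?thesis
      using Cons.IH[OF protection_invariant_step_other] Cons.prems by auto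
  qed
qed

lemma protection_invariant_run:
  assumes "set I \<subseteq> {i, j}" "i \<noteq> j" "0 \<le> m" "x \<le> m"
  shows "protection_invariant (rw r1 r2 i) (rw r1 r2 j) m x (count (mset I) i) (count (mset I) j)
           (foldl (prot_step r1 r2 m i x) (m, 0, 0) I)"
  using protection_invariant_foldl[OF protection_invariant_init assms(1,2)] assms(3,4) by simp

lemma foldl_prot_step_replicate_protected:
  assumes "0 \<le> R"
  shows "foldl (prot_step r1 r2 m i x) (R, a, tot) (replicate k i)
           = (R - min (real k) R, a, tot + rw r1 r2 i * min (real k) R)"
  using assms
proof (induction k arbitrary: R tot)
  case 0
  then show ?case by simp
next
  case (Suc k)
  have min_split: "min (1 + real k) R = min 1 R + min (real k) (R - min 1 R)"
    using Suc.prems by (auto simp: min_def)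
  show ?case
    using Suc.IH[of "R - min 1 R"] Suc.prems
    by (simp add: prot_step_protected min_split algebra_simps)
qed

lemma foldl_prot_step_replicate_other:
  assumes "j \<noteq> i" "0 \<le> R" "a \<le> m - x" "y = min (real k) (min R (m - x - a))"
  shows "foldl (prot_step r1 r2 m i x) (R, a, tot) (replicate k j)
           = (R - y, a + y, tot + rw r1 r2 j * y)"
  using assms
proof (induction k arbitrary: R a tot y)
  case 0
  then show ?case by simp
next
  case (Suc k)
  define z where "z = min 1 (min R (m - x - a))"
  define y' where "y' = min (real k) (min (R - z) (m - x - (a + z)))"
  have "0 \<le> z" "z \<le> R" "z \<le> m - x - a" using Suc.prems by (auto simp: z_def)
  have step: "prot_step r1 r2 m i x (R, a, tot) j = (R - z, a + z, tot + rw r1 r2 j * z)"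
    using \<open>0 \<le> z\<close> Suc.prems(1) by (simp add: prot_step_other Let_def flip: z_def)
  have "y = z + y'"
    using Suc.prems(4) by (auto simp: y'_def z_def min_def)
  moreover have "foldl (prot_step r1 r2 m i x) (R - z, a + z, tot + rw r1 r2 j * z) (replicate k j)
      = (R - z - y', a + z + y', tot + rw r1 r2 j * z + rw r1 r2 j * y')"
    using Suc.IH[OF Suc.prems(1), of "R - z" "a + z" y'] \<open>z \<le> R\<close> \<open>z \<le> m - x - a\<close>
    by (simp add: y'_def)
  ultimately show ?case
    by (simp add: step algebra_simps)
qed

lemma prot_reward_others_first:
  assumes "i \<noteq> j" "0 \<le> x" "x \<le> m"
  shows "prot_reward r1 r2 m i x (replicate no j @ replicate ni i)
           = rw r1 r2 i * min (real ni) (m - min (real no) (m - x)) + rw r1 r2 j * min (real no) (m - x)"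
proof -
  let ?a = "min (real no) (m - x)"
  have "?a = min (real no) (min m (m - x - 0))"
    using assms(2) by simp
  then have "foldl (prot_step r1 r2 m i x) (m, 0, 0) (replicate no j) = (m - ?a, ?a, rw r1 r2 j * ?a)"
    using assms by (simp add: foldl_prot_step_replicate_other)
  moreover have "0 \<le> m - ?a" using assms by linarith
  ultimately show ?thesis
    by (simp add: prot_reward_def foldl_prot_step_replicate_protected)
qed

lemma prot_reward_protected_first:
  assumes "i \<noteq> j" "0 \<le> x" "x \<le> m"
  shows "prot_reward r1 r2 m i x (replicate ni i @ replicate no j)
           = rw r1 r2 i * min (real ni) m + rw r1 r2 j * min (real no) (min (m - min (real ni) m) (m - x))"
proof -
  let ?b = "min (real ni) m"
  have "0 \<le> m" using assms by linarith
  then have "foldl (prot_step r1 r2 m i x) (m, 0, 0) (replicate ni i) = (m - ?b, 0, rw r1 r2 i * ?b)"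
    by (simp add: foldl_prot_step_replicate_protected)
  moreover have "0 \<le> m - ?b" by linarith
  ultimately show ?thesis
    using assms by (simp add: prot_reward_def foldl_prot_step_replicate_other)
qed

lemma weighted_sum_le_of_dominating:
  fixes w_hi w_lo v_hi v_lo u_hi u_lo :: "'a :: linordered_idom"
  assumes "0 \<le> w_lo" "w_lo \<le> w_hi" "v_hi \<le> u_hi" "v_hi + v_lo \<le> u_hi + u_lo"
  shows "w_hi * v_hi + w_lo * v_lo \<le> w_hi * u_hi + w_lo * u_lo"
proof -
  have "0 \<le> w_lo * ((u_hi + u_lo) - (v_hi + v_lo)) + (w_hi - w_lo) * (u_hi - v_hi)"
    using assms by simp
  then show ?thesis by (simp add: algebra_simps)
qed

lemma protection_invariant_reward_ge_others_first:
  assumes "0 \<le> ro" "ro \<le> ri" "protection_invariant ri ro m x ni no s"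
  shows "ri * min (real ni) (m - min (real no) (m - x)) + ro * min (real no) (m - x) \<le> snd (snd s)"
proof -
  obtain R a tot where s: "s = (R, a, tot)" by (cases s)
  define b where "b = m - R - a"
  have inv: "0 \<le> R" "a \<le> no" "a \<le> m - x" "b \<le> ni" "b = ni \<or> R = 0"
      "a = no \<or> a = m - x \<or> R = 0" "tot = ri * b + ro * a"
    using assms(3) by (auto simp: s protection_invariant_def b_def Let_def)
  let ?a = "min (real no) (m - x)" and ?b = "min (real ni) (m - min (real no) (m - x))"
  have "?b \<le> b \<and> ?b + ?a \<le> b + a"
  proof (cases "R = 0")
    case True
    then show ?thesis using inv by (auto simp: b_def min_def)
  next
    case False
    then have "b = ni" "a = ?a" using inv by auto
    then show ?thesis by linarith
  qed
  then show ?thesis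
    using weighted_sum_le_of_dominating[OF assms(1,2)] inv by (simp add: s)
qed

lemma protection_invariant_reward_ge_protected_first:
  assumes "0 \<le> ri" "ri \<le> ro" "protection_invariant ri ro m x ni no s"
  shows "ri * min (real ni) m + ro * min (real no) (min (m - min (real ni) m) (m - x)) \<le> snd (snd s)"
proof -
  obtain R a tot where s: "s = (R, a, tot)" by (cases s)
  define b where "b = m - R - a"
  have inv: "0 \<le> R" "0 \<le> a" "a \<le> no" "a \<le> m - x" "b \<le> ni" "b = ni \<or> R = 0"
      "a = no \<or> a = m - x \<or> R = 0" "tot = ri * b + ro * a"
    using assms(3) by (auto simp: s protection_invariant_def b_def Let_def)
  let ?a = "min (real no) (min (m - min (real ni) m) (m - x))" and ?b = "min (real ni) m"
  have "?a \<le> a \<and> ?a + ?b \<le> a + b"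
  proof (cases "R = 0")
    case True
    then show ?thesis using inv by (auto simp: b_def min_def)
  next
    case False
    then have "b = ni" "?a \<le> a" using inv by auto
    then show ?thesis by linarith
  qed
  then show ?thesis
    using weighted_sum_le_of_dominating[OF assms(1,2)] inv by (simp add: s add.commute)
qed

lemma prot_reward_others_first_le:
  assumes "i \<noteq> j" "0 \<le> rw r1 r2 j" "rw r1 r2 j \<le> rw r1 r2 i" "0 \<le> x" "x \<le> m"
    and "set I \<subseteq> {i, j}"
  shows "prot_reward r1 r2 m i x (replicate (count (mset I) j) j @ replicate (count (mset I) i) i)
           \<le> prot_reward r1 r2 m i x I"
proof -
  have "protection_invariant (rw r1 r2 i) (rw r1 r2 j) m x (count (mset I) i) (count (mset I) j)
          (foldl (prot_step r1 r2 m i x) (m, 0, 0) I)"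
    using assms by (intro protection_invariant_run) auto
  then show ?thesis
    unfolding prot_reward_others_first[OF assms(1,4,5)] unfolding prot_reward_def
    by (rule protection_invariant_reward_ge_others_first[OF assms(2,3)])
qed

lemma prot_reward_protected_first_le:
  assumes "i \<noteq> j" "0 \<le> rw r1 r2 i" "rw r1 r2 i \<le> rw r1 r2 j" "0 \<le> x" "x \<le> m"
    and "set I \<subseteq> {i, j}"
  shows "prot_reward r1 r2 m i x (replicate (count (mset I) i) i @ replicate (count (mset I) j) j)
           \<le> prot_reward r1 r2 m i x I"
proof -
  have "protection_invariant (rw r1 r2 i) (rw r1 r2 j) m x (count (mset I) i) (count (mset I) j)
          (foldl (prot_step r1 r2 m i x) (m, 0, 0) I)"
    using assms by (intro protection_invariant_run) auto
  then show ?thesis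
    unfolding prot_reward_protected_first[OF assms(1,4,5)] unfolding prot_reward_def
    by (rule protection_invariant_reward_ge_protected_first[OF assms(2,3)])
qed

lemma alg_reward_ordered_le:
  assumes "0 \<le> m" "0 < p" "p \<le> 1" "0 \<le> r2" "r2 \<le> r1" "set I \<subseteq> {1, 2}"
  shows "alg_reward r1 r2 m p rho1 rho2 (replicate (count (mset I) 2) 2 @ replicate (count (mset I) 1) 1) \<omega>
           \<le> alg_reward r1 r2 m p rho1 rho2 I \<omega>"
proof -
  have level: "0 \<le> min m (real n * (1 - p) / p)" "min m (real n * (1 - p) / p) \<le> m" for n
    using assms(1-3) by auto
  let ?O = "replicate (count (mset I) 2) 2 @ replicate (count (mset I) 1) (1 :: nat)"
  have "prot_reward r1 r2 m 1 x ?O \<le> prot_reward r1 r2 m 1 x I" if "0 \<le> x" "x \<le> m" for x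
    using prot_reward_others_first_le[of 1 2 r1 r2 x m I] that assms(4-6) by (simp add: rw_def)
  moreover have "prot_reward r1 r2 m 2 x ?O \<le> prot_reward r1 r2 m 2 x I" if "0 \<le> x" "x \<le> m" for x
    using prot_reward_protected_first_le[of 2 1 r1 r2 x m I] that assms(4-6)
    by (simp add: rw_def insert_commute)
  ultimately show ?thesis
    unfolding alg_reward_def using level by simp
qed

lemma prob_space_unif01: "prob_space unif01"
  unfolding unif01_def by (rule prob_space_uniform_measure) auto

lemma integrable_alg_reward: "integrable (unif01 \<Otimes>\<^sub>M unif01) (alg_reward r1 r2 m p rho1 rho2 I)"
proof -
  interpret pair_prob_space unif01 unif01
    by (simp add: pair_prob_space_def pair_sigma_finite_def prob_space_unif01 prob_space_imp_sigma_finite)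
  let ?c1 = "prot_reward r1 r2 m 1 (min m (real (length rho1) * (1 - p) / p)) I"
  let ?c2 = "prot_reward r1 r2 m 2 (min m (real (length rho2) * (1 - p) / p)) I"
  have "alg_reward r1 r2 m p rho1 rho2 I \<in> borel_measurable (unif01 \<Otimes>\<^sub>M unif01)"
    unfolding alg_reward_def[abs_def] hat_r_def unif01_def by measurable
  then show ?thesis
    by (intro P.integrable_const_bound[where B = "max \<bar>?c1\<bar> \<bar>?c2\<bar>"]) (auto simp: alg_reward_def)
qed

lemma exp_alg_reward_mono:
  assumes "\<And>\<omega>. alg_reward r1 r2 m p rho1 rho2 I \<omega> \<le> alg_reward r1 r2 m p rho1 rho2 J \<omega>"
  shows "exp_alg_reward r1 r2 m p rho1 rho2 I \<le> exp_alg_reward r1 r2 m p rho1 rho2 J"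
  unfolding exp_alg_reward_def by (intro integral_mono integrable_alg_reward assms)

lemma OPT_nonneg: "0 \<le> m \<Longrightarrow> 0 \<le> r1 \<Longrightarrow> 0 \<le> r2 \<Longrightarrow> 0 \<le> OPT r1 r2 m I"
  by (simp add: OPT_def Let_def)

theorem lemma1:
  fixes m p r1 r2 :: real and h l :: nat and rho1 rho2 :: "bool list" and I :: "nat list"
  assumes "0 < m" and "0 < p" and "p < 1"
    and "0 < r2" and "r2 < r1" and "r1 < 1"
    and "length rho1 \<le> h" and "length rho2 \<le> l"
    and "set I \<subseteq> {1, 2}"
    and "count (mset I) 1 = h - length rho1"
    and "count (mset I) 2 = l - length rho2"
  shows "exp_alg_reward r1 r2 m p rho1 rho2
           (replicate (l - length rho2) 2 @ replicate (h - length rho1) 1)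
         / OPT r1 r2 m (replicate (l - length rho2) 2 @ replicate (h - length rho1) 1)
       \<le> exp_alg_reward r1 r2 m p rho1 rho2 I / OPT r1 r2 m I"
proof -
  let ?O = "replicate (l - length rho2) 2 @ replicate (h - length rho1) (1 :: nat)"
  have O: "?O = replicate (count (mset I) 2) 2 @ replicate (count (mset I) 1) 1"
    using assms(10,11) by simp
  have "exp_alg_reward r1 r2 m p rho1 rho2 ?O \<le> exp_alg_reward r1 r2 m p rho1 rho2 I"
    unfolding O using assms(1-5,9) by (intro exp_alg_reward_mono alg_reward_ordered_le) auto
  moreover have "OPT r1 r2 m ?O = OPT r1 r2 m I"
    using assms(10,11) by (simp add: OPT_def)
  moreover have "0 \<le> OPT r1 r2 m I"
    using assms(1,4,5) by (intro OPT_nonneg) auto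
  ultimately show ?thesis
    by (simp add: divide_right_mono)
qed

end
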